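(* For every integer $s\ge3$, $F_{s,4}(x)=\frac{1}{(s-1)!}\bigl(x^2-(6s-1)x+6s^2\bigr)\prod_{p=4}^{s}(x-p)$ (an empty product equals $1$).
   Context: For an integer $j\ge0$, $\binom{x}{j}=x(x-1)\cdots(x-j+1)/j!$ as a polynomial in $x$, and $\binom{x}{j}=0$ for $j<0$. For integers $s\ge1$, $k\ge1$, the Moser polynomial is $F_{s,k}(x)=\sum_{p=1}^{s}(-1)^{p-1}p^{k-1}\binom{x}{s-p}$. *)

theory Defs
  imports "HOL-Computational_Algebra.Polynomial"
begin

definition binom_poly :: "int \<Rightarrow> 'a::field_char_0 poly" where
  "binom_poly j = (if j < 0 then 0
     else smult (1 / fact (nat j)) (\<Prod>i<nat j. [:- of_nat i, 1:]))"

definition moser_poly :: "nat \<Rightarrow> nat \<Rightarrow> 'a::field_char_0 poly" where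
  "moser_poly s k = (\<Sum>p=1..s. smult ((-1) ^ (p - 1) * of_nat p ^ (k - 1))
                                   (binom_poly (int s - int p)))"

end

theory Submission imports Defs begin

text \<open>Polynomials in characteristic 0 that agree on all natural numbers are equal, so it
  suffices to compare both sides at every n \<in> \<nat>. There F_{s,4}(n) is the integer
  M(s, n) = \<Sum>p (-1)^(p-1) p^3 C(n, s-p), which obeys Pascal's rule
  M(s+1, n+1) = M(s+1, n) + M(s, n) with M(s, 0) = (-1)^(s-1) s^3. Hence R(s, n) = (s-1)! M(s, n)
  satisfies R(s+1, n+1) = R(s+1, n) + s R(s, n); the numerator of the product formula satisfies
  the same recurrence and agrees with R at s = 3 and at n = 0.\<close>

lemma poly_eq_if_eq_on_of_nat:
  fixes p q :: "'a::{idom,ring_char_0} poly"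
  assumes "\<And>n. poly p (of_nat n) = poly q (of_nat n)"
  shows "p = q"
proof (rule ccontr)
  assume "p \<noteq> q"
  then have "finite {x. poly (p - q) x = 0}"
    by (intro poly_roots_finite) simp
  moreover have "range (of_nat :: nat \<Rightarrow> 'a) \<subseteq> {x. poly (p - q) x = 0}"
    using assms by auto
  ultimately have "finite (range (of_nat :: nat \<Rightarrow> 'a))"
    by (rule finite_subset[rotated])
  moreover have "infinite (range (of_nat :: nat \<Rightarrow> 'a))"
    using range_inj_infinite[OF inj_of_nat] .
  ultimately show False
    by contradiction
qed

lemma poly_binom_poly_of_nat:
  "poly (binom_poly (int k) :: 'a::field_char_0 poly) x = x gchoose k"
  by (simp add: binom_poly_def poly_prod gbinomial_prod_rev atLeast0LessThan
      divide_inverse mult.commute)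

definition moser_int :: "nat \<Rightarrow> nat \<Rightarrow> nat \<Rightarrow> int" where
  "moser_int s k n = (\<Sum>p=1..s. (-1) ^ (p - 1) * int p ^ (k - 1) * int (n choose (s - p)))"

lemma poly_moser_poly_of_nat:
  "poly (moser_poly s k :: 'a::field_char_0 poly) (of_nat n) = of_int (moser_int s k n)"
  unfolding moser_poly_def moser_int_def poly_sum of_int_sum
  by (rule sum.cong)
    (auto simp: of_nat_diff[symmetric] poly_binom_poly_of_nat binomial_gbinomial
      simp del: of_nat_diff)

lemma moser_int_Suc_Suc:
  "moser_int (Suc s) k (Suc n) = moser_int (Suc s) k n + moser_int s k n"
proof -
  let ?last = "(-1) ^ s * int (Suc s) ^ (k - 1)"
  have "moser_int (Suc s) k (Suc n) =
      (\<Sum>p=1..s. (-1) ^ (p - 1) * int p ^ (k - 1) * int (Suc n choose (Suc s - p))) + ?last"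
    unfolding moser_int_def by (simp add: sum.cl_ivl_Suc)
  also have "(\<Sum>p=1..s. (-1) ^ (p - 1) * int p ^ (k - 1) * int (Suc n choose (Suc s - p))) =
      (\<Sum>p=1..s. (-1) ^ (p - 1) * int p ^ (k - 1) * int (n choose (Suc s - p))) + moser_int s k n"
    unfolding moser_int_def sum.distrib[symmetric]
    by (rule sum.cong) (auto simp: Suc_diff_le algebra_simps)
  finally show ?thesis
    unfolding moser_int_def by (simp add: sum.cl_ivl_Suc)
qed

lemma moser_int_at_0:
  assumes "s \<ge> 1"
  shows "moser_int s k 0 = (-1) ^ (s - 1) * int s ^ (k - 1)"
  unfolding moser_int_def using assms
  by (subst sum.mono_neutral_cong_right[of "{1..s}" "{s}"]) auto

definition moser4_product :: "nat \<Rightarrow> nat \<Rightarrow> int" where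
  "moser4_product s n =
     (int n ^ 2 - (6 * int s - 1) * int n + 6 * int s ^ 2) * (\<Prod>p=4..s. int n - int p)"

lemma prod_shifted_factors:
  assumes "s \<ge> 3"
  shows "(\<Prod>p=4..Suc s. int (Suc n) - int p) = (int n - 3) * (\<Prod>p=4..s. int n - int p)"
proof -
  have "(\<Prod>p=Suc 3..Suc s. int (Suc n) - int p) = (\<Prod>p=3..s. int (Suc n) - int (Suc p))"
    by (rule prod.shift_bounds_cl_Suc_ivl)
  also have "\<dots> = (\<Prod>p=3..s. int n - int p)"
    by simp
  also have "\<dots> = (int n - 3) * (\<Prod>p=Suc 3..s. int n - int p)"
    using assms by (subst prod.atLeast_Suc_atMost) auto
  finally show ?thesis
    by (simp add: numeral_eq_Suc)
qed

lemma prod_neg_factors: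
  assumes "s \<ge> 3"
  shows "6 * (\<Prod>p=4..s. - int p) = (-1) ^ (s - 3) * int (fact s)"
  using assms
proof (induction s rule: dec_induct)
  case base
  then show ?case by (simp add: fact_numeral)
next
  case (step m)
  then obtain k where m: "m = k + 3"
    by (metis add.commute le_Suc_ex)
  have "6 * (\<Prod>p=4..Suc m. - int p) = - int (Suc m) * (6 * (\<Prod>p=4..m. - int p))"
    using step.hyps by (simp add: prod.cl_ivl_Suc)
  also have "\<dots> = - int (Suc m) * ((-1) ^ (m - 3) * int (fact m))"
    using step.IH by simp
  also have "\<dots> = (-1) ^ (Suc m - 3) * int (fact (Suc m))"
    unfolding fact_Suc by (simp add: m algebra_simps)
  finally show ?case .
qed

lemma moser4_product_Suc_Suc:
  assumes "s \<ge> 3"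
  shows "moser4_product (Suc s) (Suc n) = moser4_product (Suc s) n + int s * moser4_product s n"
proof -
  define Q where "Q = (\<Prod>p=4..s. int n - int p)"
  have "moser4_product (Suc s) (Suc n) =
      (int (Suc n) ^ 2 - (6 * int (Suc s) - 1) * int (Suc n) + 6 * int (Suc s) ^ 2) * ((int n - 3) * Q)"
    unfolding moser4_product_def Q_def using prod_shifted_factors[OF assms] by simp
  moreover have "moser4_product (Suc s) n =
      (int n ^ 2 - (6 * int (Suc s) - 1) * int n + 6 * int (Suc s) ^ 2) * ((int n - int (Suc s)) * Q)"
    unfolding moser4_product_def Q_def using assms by (simp add: prod.cl_ivl_Suc)
  moreover have "moser4_product s n = (int n ^ 2 - (6 * int s - 1) * int n + 6 * int s ^ 2) * Q"
    unfolding moser4_product_def Q_def by simp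
  ultimately show ?thesis
    by (simp only:) (simp add: algebra_simps power2_eq_square)
qed

lemma moser4_product_at_0:
  assumes "s \<ge> 3"
  shows "moser4_product s 0 = (-1) ^ (s - 1) * int s ^ 3 * int (fact (s - 1))"
proof -
  have fact_s: "int (fact s) = int s * int (fact (s - 1))"
    using assms by (subst fact_reduce) auto
  have sign: "(-1 :: int) ^ (s - 3) = (-1) ^ (s - 1)"
  proof -
    have "s - 1 = (s - 3) + 2"
      using assms by simp
    then show ?thesis
      by (simp add: power_add)
  qed
  have "moser4_product s 0 = int s ^ 2 * (6 * (\<Prod>p=4..s. - int p))"
    by (simp add: moser4_product_def)
  also have "\<dots> = int s ^ 2 * ((-1) ^ (s - 3) * (int s * int (fact (s - 1))))"
    unfolding prod_neg_factors[OF assms] fact_s ..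
  finally show ?thesis
    using sign
    by (simp add: algebra_simps power2_eq_square power3_eq_cube)
qed

lemma moser4_product_3: "moser4_product 3 n = 2 * moser_int 3 4 n"
proof -
  have "moser_int 3 4 n = int (n choose 2) - 8 * int n + 27"
    by (simp add: moser_int_def numeral_3_eq_3 numeral_2_eq_2 sum.cl_ivl_Suc)
  moreover have "2 * int (n choose 2) = int n * (int n - 1)"
    by (induction n) (auto simp: numeral_2_eq_2 algebra_simps)
  ultimately show ?thesis
    by (simp add: moser4_product_def power2_eq_square algebra_simps)
qed

lemma moser_int_4_product_formula:
  assumes "s \<ge> 3"
  shows "int (fact (s - 1)) * moser_int s 4 n = moser4_product s n"
  using assms
proof (induction s arbitrary: n rule: dec_induct)
  case base
  show ?case
    by (simp add: moser4_product_3 fact_numeral)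
next
  case (step t)
  have fact_t: "fact t = int t * fact (t - 1)"
    using step.hyps by (subst fact_reduce) auto
  show ?case
  proof (induction n)
    case 0
    show ?case
      using moser4_product_at_0[of "Suc t"] step.hyps by (simp add: moser_int_at_0)
  next
    case (Suc n)
    have "int (fact t) * moser_int (Suc t) 4 (Suc n) =
        int (fact t) * moser_int (Suc t) 4 n + int t * (int (fact (t - 1)) * moser_int t 4 n)"
      by (simp add: moser_int_Suc_Suc fact_t algebra_simps)
    also have "\<dots> = moser4_product (Suc t) (Suc n)"
      using Suc.IH step.IH moser4_product_Suc_Suc[OF step.hyps(1)] by simp
    finally show ?case
      by simp
  qed
qed

theorem mainTheorem7:
  fixes s :: nat
  assumes "s \<ge> 3"
  shows "(moser_poly s 4 :: 'a::field_char_0 poly) =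
    smult (1 / fact (s - 1))
      ([: 6 * of_nat s ^ 2, - (6 * of_nat s - 1), 1 :] * (\<Prod>p=4..s. [:- of_nat p, 1:]))"
proof (rule poly_eq_if_eq_on_of_nat)
  fix n
  have "of_int (moser4_product s n) = (fact (s - 1) :: 'a) * of_int (moser_int s 4 n)"
    using arg_cong[OF moser_int_4_product_formula[OF assms, of n], of "of_int :: int \<Rightarrow> 'a"]
    by simp
  then show "poly (moser_poly s 4 :: 'a poly) (of_nat n) =
      poly (smult (1 / fact (s - 1)) ([: 6 * of_nat s ^ 2, - (6 * of_nat s - 1), 1 :] *
        (\<Prod>p=4..s. [:- of_nat p, 1:]))) (of_nat n)"
    by (simp add: poly_moser_poly_of_nat moser4_product_def poly_prod field_simps
        power2_eq_square)
qed

end
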